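(* For every $m\ge 0$, the following identity holds in $A_{M,M^\perp}$: \[ \delta^m=\sum_{(\mathcal F|\mathcal G,\mathbf e)\in\mathcal T^m}x_{\mathcal F|\mathcal G}, \] where $\mathcal T^m$ is the set of pairs $(\mathcal F|\mathcal G,\mathbf e)$ such that $\mathcal F|\mathcal G$ is a biflag of length $m$, with biflats indexed $F_1|G_1,\dots,F_m|G_m$ so that $F_1\subseteq\cdots\subseteq F_m$ and $G_1\supseteq\cdots\supseteq G_m$, and $\mathbf e=(e_1,\dots,e_m)$ is a sequence of distinct elements of $E$ with, for every $1\le i\le m$, \[ e_i\in F_i\cap G_i\quad\text{and}\quad e_i=\max\Big(E-\bigcup_{j:\,e_j>e_i}(F_j\cap G_j)\Big). \]
   Context: Let $M$ be a matroid with no loops and no coloops on the ground set $E=\{0,1,\dots,n\}$, totally ordered by the usual order of integers; $M^\perp$ its dual. A biflat of $M$ is a pair $F|G$ where $F$ is a flat of $M$, $G$ is a flat of $M^\perp$, both are nonempty, they are not both equal to $E$, and $F\cup G=E$. Two biflats $F|G$, $F'|G'$ are compatible if ($F\subseteq F'$ and $G\supseteq G'$) or ($F\supseteq F'$ and $G\subseteq G'$). A biflag is a set of pairwise compatible biflats with $\bigcup_{F|G}(F\cap G)\neq E$; its length is its number of biflats. Conormal Chow ring: $S$ is the polynomial ring over $\mathbb R$ in variables $x_{F|G}$, one per biflat; $x_{\mathcal F|\mathcal G}=\prod_{F|G\in\mathcal F|\mathcal G}x_{F|G}$ for a set of biflats. For $i\in E$, $\gamma_i=\sum_{i\in F,\,F\neq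 E}x_{F|G}$, $\bar\gamma_i=\sum_{i\in G,\,G\neq E}x_{F|G}$, $\delta_i=\sum_{i\in F\cap G}x_{F|G}$. $I$ is generated by the $x_{\mathcal F|\mathcal G}$ for sets of biflats that are not biflags, $J$ by all $\gamma_i-\gamma_j$, $\bar\gamma_i-\bar\gamma_j$; $A_{M,M^\perp}=S/(I+J)$, and $\delta$ denotes the common class of all $\delta_i$. *)

theory Defs
  imports Complex_Main "HOL-Library.Poly_Mapping"
begin

definition matroid_bases :: "nat set \<Rightarrow> nat set set \<Rightarrow> bool" where
  "matroid_bases E B \<longleftrightarrow> finite E \<and> B \<noteq> {} \<and> (\<forall>b\<in>B. b \<subseteq> E) \<and>
     (\<forall>b1\<in>B. \<forall>b2\<in>B. \<forall>x\<in>b1 - b2. \<exists>y\<in>b2 - b1. insert y (b1 - {x}) \<in> B)"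

definition no_loops :: "nat set \<Rightarrow> nat set set \<Rightarrow> bool" where
  "no_loops E B \<longleftrightarrow> (\<forall>e\<in>E. \<exists>b\<in>B. e \<in> b)"

definition no_coloops :: "nat set \<Rightarrow> nat set set \<Rightarrow> bool" where
  "no_coloops E B \<longleftrightarrow> (\<forall>e\<in>E. \<exists>b\<in>B. e \<notin> b)"

definition dual_bases :: "nat set \<Rightarrow> nat set set \<Rightarrow> nat set set" where
  "dual_bases E B = (\<lambda>b. E - b) ` B"

definition mrank :: "nat set set \<Rightarrow> nat set \<Rightarrow> nat" where
  "mrank B X = Max ((\<lambda>b. card (X \<inter> b)) ` B)"

definition is_flat :: "nat set \<Rightarrow> nat set set \<Rightarrow> nat set \<Rightarrow> bool" where
  "is_flat E B F \<longleftrightarrow> F \<subseteq> E \<and> (\<forall>e\<in>E - F. mrank B (insert e F) > mrank B F)"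

type_synonym biflat = "nat set \<times> nat set"

definition is_biflat :: "nat set \<Rightarrow> nat set set \<Rightarrow> biflat \<Rightarrow> bool" where
  "is_biflat E B FG \<longleftrightarrow> (case FG of (F, G) \<Rightarrow>
     is_flat E B F \<and> is_flat E (dual_bases E B) G \<and> F \<noteq> {} \<and> G \<noteq> {} \<and>
     \<not> (F = E \<and> G = E) \<and> F \<union> G = E)"

definition compatible :: "biflat \<Rightarrow> biflat \<Rightarrow> bool" where
  "compatible FG FG' \<longleftrightarrow> (case FG of (F, G) \<Rightarrow> case FG' of (F', G') \<Rightarrow>
     (F \<subseteq> F' \<and> G' \<subseteq> G) \<or> (F' \<subseteq> F \<and> G \<subseteq> G'))"

definition is_biflag :: "nat set \<Rightarrow> nat set set \<Rightarrow> biflat set \<Rightarrow> bool" where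
  "is_biflag E B S \<longleftrightarrow> (\<forall>FG\<in>S. is_biflat E B FG) \<and>
     (\<forall>FG\<in>S. \<forall>FG'\<in>S. compatible FG FG') \<and>
     (\<Union>(F, G)\<in>S. F \<inter> G) \<noteq> E"

text \<open>Polynomials over the reals: finitely supported maps from monomials
  (finitely supported exponent vectors) to coefficients.\<close>
type_synonym poly = "((biflat \<Rightarrow>\<^sub>0 nat) \<Rightarrow>\<^sub>0 real)"

definition var :: "biflat \<Rightarrow> poly" where
  "var v = Poly_Mapping.single (Poly_Mapping.single v 1) 1"

definition xprod :: "biflat set \<Rightarrow> poly" where
  "xprod S = (\<Prod>v\<in>S. var v)"

definition biflats :: "nat set \<Rightarrow> nat set set \<Rightarrow> biflat set" where
  "biflats E B = {FG. is_biflat E B FG}"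

definition gamma :: "nat set \<Rightarrow> nat set set \<Rightarrow> nat \<Rightarrow> poly" where
  "gamma E B i = (\<Sum>FG\<in>{(F, G). is_biflat E B (F, G) \<and> i \<in> F \<and> F \<noteq> E}. var FG)"

definition gammabar :: "nat set \<Rightarrow> nat set set \<Rightarrow> nat \<Rightarrow> poly" where
  "gammabar E B i = (\<Sum>FG\<in>{(F, G). is_biflat E B (F, G) \<and> i \<in> G \<and> G \<noteq> E}. var FG)"

definition delta :: "nat set \<Rightarrow> nat set set \<Rightarrow> nat \<Rightarrow> poly" where
  "delta E B i = (\<Sum>FG\<in>{(F, G). is_biflat E B (F, G) \<and> i \<in> F \<inter> G}. var FG)"

definition ideal_gen :: "poly set \<Rightarrow> poly set" where
  "ideal_gen S = {p. \<exists>A c. finite A \<and> A \<subseteq> S \<and> p = (\<Sum>g\<in>A. c g * g)}"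

definition I_gens :: "nat set \<Rightarrow> nat set set \<Rightarrow> poly set" where
  "I_gens E B = {xprod S | S. S \<subseteq> biflats E B \<and> \<not> is_biflag E B S}"

definition J_gens :: "nat set \<Rightarrow> nat set set \<Rightarrow> poly set" where
  "J_gens E B = {gamma E B i - gamma E B j | i j. i \<in> E \<and> j \<in> E} \<union>
                {gammabar E B i - gammabar E B j | i j. i \<in> E \<and> j \<in> E}"

definition chow_eq :: "nat set \<Rightarrow> nat set set \<Rightarrow> poly \<Rightarrow> poly \<Rightarrow> bool" where
  "chow_eq E B p q \<longleftrightarrow> p - q \<in> ideal_gen (I_gens E B \<union> J_gens E B)"

text \<open>A biflag of length m is represented by the list of its biflats,
  indexed so that F_1 \<subseteq> ... \<subseteq> F_m and G_1 \<supseteq> ... \<supseteq> G_m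
  (this indexing is uniquely determined by the biflag); e is the list (e_1,...,e_m).\<close>
definition T_set :: "nat set \<Rightarrow> nat set set \<Rightarrow> nat \<Rightarrow> (biflat list \<times> nat list) set" where
  "T_set E B m = {(L, e). length L = m \<and> distinct L \<and> is_biflag E B (set L) \<and>
     (\<forall>i j. i < j \<and> j < m \<longrightarrow> fst (L ! i) \<subseteq> fst (L ! j) \<and> snd (L ! j) \<subseteq> snd (L ! i)) \<and>
     length e = m \<and> distinct e \<and> set e \<subseteq> E \<and>
     (\<forall>i < m. e ! i \<in> fst (L ! i) \<inter> snd (L ! i) \<and>
        e ! i = Max (E - (\<Union>j\<in>{j. j < m \<and> e ! j > e ! i}. fst (L ! j) \<inter> snd (L ! j))))}"

end

theory Submission
  imports Defs
begin

text \<open>All \<open>\<delta>\<^sub>k\<close> coincide in the Chow ring, because for \<open>k \<in> E\<close>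
  \<open>delta k = gamma k + gammabar k - \<Sum>\<^bsub>F \<noteq> E, G \<noteq> E\<^esub> x\<^bsub>F|G\<^esub>\<close> with a correction term independent
  of \<open>k\<close>. So in the inductive step each term \<open>x\<^sub>S\<close> of \<open>\<delta>\<^sup>m\<close> may be multiplied by \<open>\<delta>\<^sub>k\<close>, where \<open>k\<close>
  is the largest element of \<open>E\<close> not covered by the cores \<open>F \<inter> G\<close> of the biflats in \<open>S\<close>. This gives the
  products \<open>x\<^sub>S x\<^sub>H\<close> over the biflats \<open>H\<close> whose core contains \<open>k\<close>; those that are not biflags lie in \<open>I\<close>.
  The remaining pairs \<open>(S, H)\<close> correspond bijectively to the labelled biflags of length \<open>m + 1\<close>:
  \<open>H\<close> receives the label \<open>k\<close>, which is smaller than all labels in \<open>S\<close>, and conversely removing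
  the biflat with the smallest label recovers \<open>(S, H)\<close>.\<close>

section \<open>Ideals generated by polynomials\<close>

lemma ideal_gen_generator: "g \<in> S \<Longrightarrow> g \<in> ideal_gen S"
  unfolding ideal_gen_def by (intro CollectI exI[of _ "{g}"] exI[of _ "\<lambda>_. 1"]) simp

lemma ideal_gen_zero: "0 \<in> ideal_gen S"
  unfolding ideal_gen_def by (intro CollectI exI[of _ "{}"]) simp

lemma ideal_gen_add:
  assumes "p \<in> ideal_gen S" "q \<in> ideal_gen S"
  shows "p + q \<in> ideal_gen S"
proof -
  obtain A c where A: "finite A" "A \<subseteq> S" "p = (\<Sum>g\<in>A. c g * g)"
    using assms(1) unfolding ideal_gen_def by blast
  obtain A' c' where A': "finite A'" "A' \<subseteq> S" "q = (\<Sum>g\<in>A'. c' g * g)"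
    using assms(2) unfolding ideal_gen_def by blast
  let ?d = "\<lambda>g. (if g \<in> A then c g else 0) + (if g \<in> A' then c' g else 0)"
  have "(\<Sum>g\<in>A \<union> A'. ?d g * g) = p + q"
    using A A' by (simp add: distrib_right sum.distrib sum.If_cases Int_absorb1 Int_absorb2
        if_distrib[where f = "\<lambda>a. a * _"])
  then show ?thesis
    using A A' unfolding ideal_gen_def by (intro CollectI exI[of _ "A \<union> A'"] exI[of _ ?d]) auto
qed

lemma ideal_gen_mult:
  assumes "p \<in> ideal_gen S"
  shows "r * p \<in> ideal_gen S"
proof -
  obtain A c where A: "finite A" "A \<subseteq> S" "p = (\<Sum>g\<in>A. c g * g)"
    using assms unfolding ideal_gen_def by blast
  have "r * p = (\<Sum>g\<in>A. (r * c g) * g)"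
    unfolding A(3) sum_distrib_left by (simp add: mult.assoc)
  then show ?thesis
    using A unfolding ideal_gen_def by (intro CollectI exI[of _ A] exI[of _ "\<lambda>g. r * c g"]) simp
qed

lemma ideal_gen_sum: "(\<And>x. x \<in> A \<Longrightarrow> h x \<in> ideal_gen S) \<Longrightarrow> sum h A \<in> ideal_gen S"
  by (induction A rule: infinite_finite_induct) (simp_all add: ideal_gen_zero ideal_gen_add)

section \<open>Biflats and the linear relations\<close>

abbreviation chow_ideal :: "nat set \<Rightarrow> nat set set \<Rightarrow> poly set" where
  "chow_ideal E B \<equiv> ideal_gen (I_gens E B \<union> J_gens E B)"

definition core :: "biflat \<Rightarrow> nat set" where
  "core x = fst x \<inter> snd x"

lemma is_biflat_subset: "is_biflat E B x \<Longrightarrow> fst x \<subseteq> E \<and> snd x \<subseteq> E"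
  by (cases x) (auto simp: is_biflat_def is_flat_def)

lemma finite_biflats: "finite E \<Longrightarrow> finite (biflats E B)"
  by (rule finite_subset[of _ "Pow E \<times> Pow E"]) (force simp: biflats_def dest: is_biflat_subset)+

lemma is_biflag_biflats: "is_biflag E B S \<Longrightarrow> S \<subseteq> biflats E B"
  unfolding is_biflag_def biflats_def by blast

lemma is_biflag_iff_cores:
  "is_biflag E B S \<longleftrightarrow> (\<forall>x\<in>S. is_biflat E B x) \<and> (\<forall>x\<in>S. \<forall>y\<in>S. compatible x y) \<and>
     \<Union>(core ` S) \<noteq> E"
proof -
  have "(\<Union>(F, G)\<in>S. F \<inter> G) = \<Union>(core ` S)"
    by (auto simp: core_def)
  then show ?thesis
    unfolding is_biflag_def by simp
qed

lemma cores_subset: "is_biflag E B S \<Longrightarrow> \<Union>(core ` S) \<subseteq> E"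
  using is_biflat_subset[of E B] by (fastforce simp: is_biflag_def core_def)

lemma is_biflag_subset:
  assumes "is_biflag E B S" "S' \<subseteq> S"
  shows "is_biflag E B S'"
proof -
  have "\<Union>(core ` S') \<subseteq> \<Union>(core ` S)"
    using assms(2) by blast
  moreover have "\<Union>(core ` S) \<subseteq> E"
    using assms(1) by (rule cores_subset)
  moreover have "\<Union>(core ` S) \<noteq> E"
    using assms(1) by (simp add: is_biflag_iff_cores)
  ultimately have "\<Union>(core ` S') \<noteq> E"
    by blast
  moreover have "\<forall>x\<in>S'. is_biflat E B x" "\<forall>x\<in>S'. \<forall>y\<in>S'. compatible x y"
    using assms unfolding is_biflag_def by blast+
  ultimately show ?thesis
    by (simp add: is_biflag_iff_cores)
qed

lemma sum_var_biflats_filter: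
  "finite E \<Longrightarrow> (\<Sum>x\<in>{(F, G). is_biflat E B (F, G) \<and> P F G}. var x) =
     (\<Sum>x\<in>biflats E B. if P (fst x) (snd x) then var x else 0)"
  by (subst sum.inter_filter[OF finite_biflats, symmetric])
    (auto intro: sum.cong simp: biflats_def)

lemma indicator_inter_of_union:
  fixes v :: "'a::ab_group_add"
  assumes "F \<union> G = E" "\<not> (F = E \<and> G = E)" "k \<in> E"
  shows "(if k \<in> F \<inter> G then v else 0) =
    (if k \<in> F \<and> F \<noteq> E then v else 0) + (if k \<in> G \<and> G \<noteq> E then v else 0) -
    (if F \<noteq> E \<and> G \<noteq> E then v else 0)"
  using assms by (cases "F = E"; cases "G = E") auto

lemma delta_eq_gamma_gammabar:
  assumes "finite E" "k \<in> E"
  shows "delta E B k = gamma E B k + gammabar E B k -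
           (\<Sum>x\<in>{(F, G). is_biflat E B (F, G) \<and> F \<noteq> E \<and> G \<noteq> E}. var x)"
  unfolding delta_def gamma_def gammabar_def sum_var_biflats_filter[OF assms(1)]
    sum.distrib[symmetric] sum_subtractf[symmetric]
proof (rule sum.cong[OF refl])
  fix x assume "x \<in> biflats E B"
  then have "fst x \<union> snd x = E" "\<not> (fst x = E \<and> snd x = E)"
    by (auto simp: biflats_def is_biflat_def split: prod.splits)
  then show "(if k \<in> fst x \<inter> snd x then var x else 0) =
      (if k \<in> fst x \<and> fst x \<noteq> E then var x else 0) + (if k \<in> snd x \<and> snd x \<noteq> E then var x else 0) -
      (if fst x \<noteq> E \<and> snd x \<noteq> E then var x else 0)"
    using assms(2) by (rule indicator_inter_of_union)
qed

lemma delta_diff_in_chow_ideal: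
  assumes "finite E" "i \<in> E" "k \<in> E"
  shows "delta E B i - delta E B k \<in> chow_ideal E B"
proof -
  have "delta E B i - delta E B k = (gamma E B i - gamma E B k) + (gammabar E B i - gammabar E B k)"
    using delta_eq_gamma_gammabar[OF assms(1,2)] delta_eq_gamma_gammabar[OF assms(1,3)] by simp
  moreover have "gamma E B i - gamma E B k \<in> chow_ideal E B" "gammabar E B i - gammabar E B k \<in> chow_ideal E B"
    using assms(2,3) by (auto intro!: ideal_gen_generator simp: J_gens_def)
  ultimately show ?thesis
    by (simp add: ideal_gen_add)
qed

section \<open>Labelled biflags and the recursion for \<open>\<delta>\<^sup>m\<close>\<close>

definition free_max :: "nat set \<Rightarrow> biflat set \<Rightarrow> nat" where
  "free_max E S = Max (E - \<Union>(core ` S))"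

lemma free_max_mem:
  assumes "finite E" "is_biflag E B S"
  shows "free_max E S \<in> E - \<Union>(core ` S)"
proof -
  have "\<Union>(core ` S) \<subseteq> E"
    using assms(2) by (rule cores_subset)
  moreover have "\<Union>(core ` S) \<noteq> E"
    using assms(2) by (simp add: is_biflag_iff_cores)
  ultimately have "E - \<Union>(core ` S) \<noteq> {}"
    by blast
  then show ?thesis
    unfolding free_max_def using assms(1) by (intro Max_in) auto
qed

text \<open>A labelled biflag \<open>(S, f)\<close> is the set-level form of an element \<open>(F|G, e)\<close> of \<open>T_set\<close>:
  \<open>f\<close> sends the biflat \<open>F\<^sub>i|G\<^sub>i\<close> to \<open>e\<^sub>i\<close> and vanishes off \<open>S\<close>, so that the pair is unique.\<close>
definition greedy_labelling :: "nat set \<Rightarrow> biflat set \<Rightarrow> (biflat \<Rightarrow> nat) \<Rightarrow> bool" where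
  "greedy_labelling E S f \<longleftrightarrow> inj_on f S \<and>
     (\<forall>x\<in>S. f x \<in> E \<inter> core x \<and> f x = Max (E - \<Union>(core ` {y \<in> S. f x < f y})))"

definition labelled_biflags :: "nat set \<Rightarrow> nat set set \<Rightarrow> nat \<Rightarrow> (biflat set \<times> (biflat \<Rightarrow> nat)) set" where
  "labelled_biflags E B m = {(S, f). finite S \<and> card S = m \<and> is_biflag E B S \<and>
     (\<forall>x. x \<notin> S \<longrightarrow> f x = 0) \<and> greedy_labelling E S f}"

lemma greedy_labellingD:
  assumes "greedy_labelling E S f" "x \<in> S"
  shows "f x \<in> E" "f x \<in> core x" "f x = Max (E - \<Union>(core ` {y \<in> S. f x < f y}))"
  using assms unfolding greedy_labelling_def by blast+

lemma labelled_biflagsD: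
  assumes "(S, f) \<in> labelled_biflags E B m"
  shows "finite S" "card S = m" "is_biflag E B S" "\<And>x. x \<notin> S \<Longrightarrow> f x = 0"
    "greedy_labelling E S f"
  using assms unfolding labelled_biflags_def by blast+

lemma greedy_labelling_insert_min:
  assumes "H \<notin> S" and agree: "\<And>y. y \<in> S \<Longrightarrow> g y = f y" and min: "\<And>y. y \<in> S \<Longrightarrow> g H < g y"
  shows "greedy_labelling E (insert H S) g \<longleftrightarrow>
    greedy_labelling E S f \<and> g H \<in> E \<inter> core H \<and> g H = free_max E S"
proof -
  have above_H: "{y \<in> insert H S. g H < g y} = S"
    using min by auto
  have above: "{y \<in> insert H S. g x < g y} = {y \<in> S. f x < f y}" if "x \<in> S" for x
    using assms(1) agree min[OF that] agree[OF that] by (auto dest: less_asym)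
  have "g H \<notin> g ` S"
    using min by (metis image_iff less_irrefl)
  then have "inj_on g (insert H S) \<longleftrightarrow> inj_on g S"
    using assms(1) by (simp add: inj_on_insert)
  also have "\<dots> \<longleftrightarrow> inj_on f S"
    using agree by (rule inj_on_cong)
  finally show ?thesis
    unfolding greedy_labelling_def free_max_def using above_H above agree by auto
qed

lemma free_max_less_label:
  assumes "finite E" "(S, f) \<in> labelled_biflags E B m" "x \<in> S"
  shows "free_max E S < f x"
proof -
  let ?above = "{y \<in> S. f x < f y}"
  note biflag = labelled_biflagsD(3)[OF assms(2)]
  note label = greedy_labellingD(2,3)[OF labelled_biflagsD(5)[OF assms(2)] assms(3)]
  have "free_max E S \<in> E - \<Union>(core ` ?above)"
    using free_max_mem[OF assms(1) biflag] by blast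
  then have "free_max E S \<le> Max (E - \<Union>(core ` ?above))"
    using assms(1) by (intro Max_ge) auto
  then have "free_max E S \<le> f x"
    by (simp only: label(2)[symmetric])
  moreover have "free_max E S \<noteq> f x"
  proof -
    have "free_max E S \<notin> core x"
      using free_max_mem[OF assms(1) biflag] assms(3) by blast
    then show ?thesis
      using label(1) by force
  qed
  ultimately show ?thesis
    by linarith
qed

definition extensions :: "nat set \<Rightarrow> nat set set \<Rightarrow> biflat set \<Rightarrow> biflat set" where
  "extensions E B S = {H \<in> biflats E B. free_max E S \<in> core H \<and> is_biflag E B (insert H S)}"

definition extend :: "nat set \<Rightarrow> (biflat set \<times> (biflat \<Rightarrow> nat)) \<times> biflat \<Rightarrow> biflat set \<times> (biflat \<Rightarrow> nat)" where
  "extend E = (\<lambda>((S, f), H). (insert H S, f(H := free_max E S)))"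

lemma extension_notin:
  "finite E \<Longrightarrow> is_biflag E B S \<Longrightarrow> H \<in> extensions E B S \<Longrightarrow> H \<notin> S"
  using free_max_mem unfolding extensions_def by blast

lemma extend_mem_labelled_biflags:
  assumes "finite E" "(S, f) \<in> labelled_biflags E B m" "H \<in> extensions E B S"
  shows "extend E ((S, f), H) \<in> labelled_biflags E B (Suc m)"
proof -
  let ?g = "f(H := free_max E S)"
  note S = labelled_biflagsD[OF assms(2)]
  have H: "free_max E S \<in> core H" "is_biflag E B (insert H S)"
    using assms(3) by (auto simp: extensions_def)
  have "H \<notin> S"
    using extension_notin[OF assms(1) S(3) assms(3)] .
  have agree: "?g y = f y" if "y \<in> S" for y
    using that \<open>H \<notin> S\<close> by auto
  have min: "?g H < ?g y" if "y \<in> S" for y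
    using free_max_less_label[OF assms(1,2) that] agree[OF that] by simp
  have "greedy_labelling E (insert H S) ?g"
    using greedy_labelling_insert_min[of H S ?g f E, OF \<open>H \<notin> S\<close> agree min]
      free_max_mem[OF assms(1) S(3)] S(5) H(1) by simp
  then show ?thesis
    using S H \<open>H \<notin> S\<close> by (auto simp: labelled_biflags_def extend_def)
qed

lemma labelled_biflags_Suc_in_extend_image:
  assumes "finite E" "(S', f') \<in> labelled_biflags E B (Suc m)"
  shows "(S', f') \<in> extend E ` (SIGMA p:labelled_biflags E B m. extensions E B (fst p))"
proof -
  note S' = labelled_biflagsD[OF assms(2)]
  have "S' \<noteq> {}"
    using S'(2) by auto
  then have "Min (f' ` S') \<in> f' ` S'"
    using S'(1) by simp
  then obtain H where "H \<in> S'" and H_min: "f' H = Min (f' ` S')"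
    by (metis imageE)
  define S where "S = S' - {H}"
  define f where "f = f'(H := 0)"
  have S'_eq: "S' = insert H S" and "H \<notin> S"
    using \<open>H \<in> S'\<close> unfolding S_def by auto
  have agree: "f' y = f y" if "y \<in> S" for y
    using that \<open>H \<notin> S\<close> unfolding f_def by auto
  have min: "f' H < f' y" if "y \<in> S" for y
  proof -
    have "y \<in> S'" "y \<noteq> H"
      using that \<open>H \<notin> S\<close> S'_eq by auto
    moreover have "inj_on f' S'"
      using S'(5) by (simp add: greedy_labelling_def)
    ultimately have "f' H \<noteq> f' y"
      using \<open>H \<in> S'\<close> unfolding inj_on_def by metis
    moreover have "f' H \<le> f' y"
      using S'(1) H_min \<open>y \<in> S'\<close> by simp
    ultimately show ?thesis
      by simp
  qed
  have "greedy_labelling E (insert H S) f'"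
    using S'(5) S'_eq by simp
  then have labels: "greedy_labelling E S f" "f' H \<in> E \<inter> core H" "f' H = free_max E S"
    using greedy_labelling_insert_min[of H S f' f E, OF \<open>H \<notin> S\<close> agree min] by blast+
  have "(S, f) \<in> labelled_biflags E B m"
  proof -
    have "finite S" "card S = m"
      using S'(1,2) S'_eq \<open>H \<notin> S\<close> by auto
    moreover have "is_biflag E B S"
      using is_biflag_subset[OF S'(3)] S'_eq by blast
    moreover have "f x = 0" if "x \<notin> S" for x
      using S'(4)[of x] that S'_eq unfolding f_def by auto
    ultimately show ?thesis
      using labels(1) unfolding labelled_biflags_def by blast
  qed
  moreover have "H \<in> extensions E B S"
    using S'(3) S'_eq labels(2,3) is_biflag_biflats[OF S'(3)] unfolding extensions_def by auto
  moreover have "extend E ((S, f), H) = (S', f')"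
    using S'_eq labels(3) unfolding extend_def f_def by auto
  ultimately show ?thesis
    by force
qed

lemma extend_inj_on:
  assumes "finite E"
  shows "inj_on (extend E) (SIGMA p:labelled_biflags E B m. extensions E B (fst p))"
proof (rule inj_onI)
  fix p q
  assume p: "p \<in> (SIGMA p:labelled_biflags E B m. extensions E B (fst p))"
    and q: "q \<in> (SIGMA p:labelled_biflags E B m. extensions E B (fst p))"
    and eq: "extend E p = extend E q"
  obtain S1 f1 H1 where p_def: "p = ((S1, f1), H1)"
    by (metis prod.collapse)
  obtain S2 f2 H2 where q_def: "q = ((S2, f2), H2)"
    by (metis prod.collapse)
  have T1: "(S1, f1) \<in> labelled_biflags E B m" and E1: "H1 \<in> extensions E B S1"
    and T2: "(S2, f2) \<in> labelled_biflags E B m" and E2: "H2 \<in> extensions E B S2"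
    using p q unfolding p_def q_def by auto
  have notin: "H1 \<notin> S1" "H2 \<notin> S2"
    using extension_notin[OF assms labelled_biflagsD(3)] T1 T2 E1 E2 by blast+
  have zero: "f1 H1 = 0" "f2 H2 = 0"
    using labelled_biflagsD(4)[OF T1] labelled_biflagsD(4)[OF T2] notin by blast+
  have S_eq: "insert H1 S1 = insert H2 S2" and f_eq: "f1(H1 := free_max E S1) = f2(H2 := free_max E S2)"
    using eq unfolding p_def q_def by (simp_all add: extend_def)
  have "H1 = H2"
  proof (rule ccontr)
    assume ne: "H1 \<noteq> H2"
    then have "H2 \<in> S1" "H1 \<in> S2"
      using S_eq by (metis insertE insertI1)+
    have "free_max E S1 < f1 H2"
      using free_max_less_label[OF assms T1 \<open>H2 \<in> S1\<close>] .
    also have "f1 H2 = free_max E S2"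
      using fun_cong[OF f_eq, of H2] ne by simp
    also have "free_max E S2 < f2 H1"
      using free_max_less_label[OF assms T2 \<open>H1 \<in> S2\<close>] .
    also have "f2 H1 = free_max E S1"
      using fun_cong[OF f_eq, of H1] ne by simp
    finally show False
      by simp
  qed
  moreover have "S1 = S2"
    using S_eq notin \<open>H1 = H2\<close> by (metis Diff_insert_absorb)
  moreover have "f1 = f2"
  proof
    fix x
    show "f1 x = f2 x"
      using fun_cong[OF f_eq, of x] zero \<open>H1 = H2\<close> by (cases "x = H1") auto
  qed
  ultimately show "p = q"
    unfolding p_def q_def by simp
qed

lemma bij_betw_extend:
  assumes "finite E"
  shows "bij_betw (extend E) (SIGMA p:labelled_biflags E B m. extensions E B (fst p))
           (labelled_biflags E B (Suc m))"
  unfolding bij_betw_def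
proof
  show "inj_on (extend E) (SIGMA p:labelled_biflags E B m. extensions E B (fst p))"
    using assms by (rule extend_inj_on)
  show "extend E ` (SIGMA p:labelled_biflags E B m. extensions E B (fst p)) = labelled_biflags E B (Suc m)"
  proof
    show "extend E ` (SIGMA p:labelled_biflags E B m. extensions E B (fst p)) \<subseteq> labelled_biflags E B (Suc m)"
      using extend_mem_labelled_biflags[OF assms] by auto
    show "labelled_biflags E B (Suc m) \<subseteq> extend E ` (SIGMA p:labelled_biflags E B m. extensions E B (fst p))"
      using labelled_biflags_Suc_in_extend_image[OF assms] by auto
  qed
qed

lemma finite_labelled_biflags:
  assumes "finite E"
  shows "finite (labelled_biflags E B m)"
proof (rule finite_subset)
  let ?labels = "{f. \<forall>x. (x \<in> biflats E B \<longrightarrow> f x \<in> insert 0 E) \<and> (x \<notin> biflats E B \<longrightarrow> f x = 0)}"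
  show "labelled_biflags E B m \<subseteq> Pow (biflats E B) \<times> ?labels"
    by (force simp: labelled_biflags_def greedy_labelling_def dest: is_biflag_biflats)
  show "finite (Pow (biflats E B) \<times> ?labels)"
    using finite_biflats[OF assms] assms by (intro finite_cartesian_product finite_set_of_finite_funs) auto
qed

lemma xprod_insert: "finite S \<Longrightarrow> H \<notin> S \<Longrightarrow> xprod (insert H S) = xprod S * var H"
  unfolding xprod_def by (simp add: mult.commute)

lemma xprod_delta_free_max:
  assumes "finite E" "is_biflag E B S" "finite S"
  shows "xprod S * delta E B (free_max E S) - (\<Sum>H\<in>extensions E B S. xprod (insert H S))
           \<in> chow_ideal E B"
proof -
  let ?C = "{H \<in> biflats E B. free_max E S \<in> core H}"
  let ?non_biflags = "{H \<in> biflats E B. free_max E S \<in> core H \<and> \<not> is_biflag E B (insert H S)}"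
  have C_split: "?C = extensions E B S \<union> ?non_biflags" "extensions E B S \<inter> ?non_biflags = {}"
    by (auto simp: extensions_def)
  have finite: "finite (extensions E B S)" "finite ?non_biflags"
    using finite_biflats[OF assms(1)] by (auto simp: extensions_def)
  have "{(F, G). is_biflat E B (F, G) \<and> free_max E S \<in> F \<inter> G} = ?C"
    by (auto simp: biflats_def core_def)
  then have "xprod S * delta E B (free_max E S) = (\<Sum>H\<in>?C. xprod S * var H)"
    unfolding delta_def by (simp add: sum_distrib_left)
  also have "\<dots> = (\<Sum>H\<in>?C. xprod (insert H S))"
  proof (rule sum.cong[OF refl])
    fix H assume "H \<in> ?C"
    then have "H \<notin> S"
      using free_max_mem[OF assms(1,2)] by blast
    then show "xprod S * var H = xprod (insert H S)"
      using xprod_insert[OF assms(3)] by simp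
  qed
  also have "\<dots> = (\<Sum>H\<in>extensions E B S. xprod (insert H S)) + (\<Sum>H\<in>?non_biflags. xprod (insert H S))"
    using sum.union_disjoint[OF finite C_split(2), of "\<lambda>H. xprod (insert H S)"] C_split(1) by simp
  finally have "xprod S * delta E B (free_max E S) - (\<Sum>H\<in>extensions E B S. xprod (insert H S)) =
      (\<Sum>H\<in>?non_biflags. xprod (insert H S))"
    by simp
  moreover have "(\<Sum>H\<in>?non_biflags. xprod (insert H S)) \<in> chow_ideal E B"
  proof (rule ideal_gen_sum)
    fix H assume H: "H \<in> ?non_biflags"
    then have "insert H S \<subseteq> biflats E B"
      using is_biflag_biflats[OF assms(2)] by blast
    with H show "xprod (insert H S) \<in> chow_ideal E B"
      by (intro ideal_gen_generator) (auto simp: I_gens_def)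
  qed
  ultimately show ?thesis
    by simp
qed

lemma sum_extensions_eq:
  assumes "finite E"
  shows "(\<Sum>p\<in>labelled_biflags E B m. \<Sum>H\<in>extensions E B (fst p). xprod (insert H (fst p))) =
           (\<Sum>q\<in>labelled_biflags E B (Suc m). xprod (fst q))"
proof -
  have "(\<Sum>p\<in>labelled_biflags E B m. \<Sum>H\<in>extensions E B (fst p). xprod (insert H (fst p))) =
      (\<Sum>q\<in>(SIGMA p:labelled_biflags E B m. extensions E B (fst p)). xprod (fst (extend E q)))"
    using finite_labelled_biflags[OF assms] finite_biflats[OF assms]
    by (subst sum.Sigma) (auto simp: extensions_def extend_def split_beta)
  also have "\<dots> = (\<Sum>q\<in>labelled_biflags E B (Suc m). xprod (fst q))"
    by (rule sum.reindex_bij_betw[OF bij_betw_extend[OF assms]])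
  finally show ?thesis .
qed

lemma labelled_biflags_0:
  assumes "E \<noteq> {}"
  shows "labelled_biflags E B 0 = {({}, \<lambda>_. 0)}"
proof -
  have "is_biflag E B {}"
    using assms by (simp add: is_biflag_def)
  then show ?thesis
    by (auto simp: labelled_biflags_def greedy_labelling_def)
qed

lemma delta_power_labelled_biflags:
  assumes "finite E" "i \<in> E"
  shows "delta E B i ^ m - (\<Sum>p\<in>labelled_biflags E B m. xprod (fst p)) \<in> chow_ideal E B"
proof (induction m)
  case 0
  have "E \<noteq> {}"
    using assms(2) by blast
  then show ?case
    by (simp add: labelled_biflags_0 xprod_def ideal_gen_zero)
next
  case (Suc m)
  let ?\<delta> = "delta E B i" and ?\<delta>' = "\<lambda>p. delta E B (free_max E (fst p))"
  let ?A = "\<lambda>m. \<Sum>p\<in>labelled_biflags E B m. xprod (fst p)"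
  let ?ext = "\<lambda>p. \<Sum>H\<in>extensions E B (fst p). xprod (insert H (fst p))"
  let ?Q = "\<Sum>p\<in>labelled_biflags E B m. xprod (fst p) * ?\<delta>' p"
  have "?\<delta> ^ Suc m - ?A (Suc m) = ?\<delta> * (?\<delta> ^ m - ?A m) + (?A m * ?\<delta> - ?Q) + (?Q - ?A (Suc m))"
    by (simp add: algebra_simps)
  also have "?A m * ?\<delta> - ?Q = (\<Sum>p\<in>labelled_biflags E B m. xprod (fst p) * (?\<delta> - ?\<delta>' p))"
    by (simp add: right_diff_distrib sum_subtractf sum_distrib_right)
  also have "?Q - ?A (Suc m) = (\<Sum>p\<in>labelled_biflags E B m. xprod (fst p) * ?\<delta>' p - ?ext p)"
    by (simp add: sum_subtractf sum_extensions_eq[OF assms(1)])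
  finally have split: "?\<delta> ^ Suc m - ?A (Suc m) = ?\<delta> * (?\<delta> ^ m - ?A m) +
      (\<Sum>p\<in>labelled_biflags E B m. xprod (fst p) * (?\<delta> - ?\<delta>' p)) +
      (\<Sum>p\<in>labelled_biflags E B m. xprod (fst p) * ?\<delta>' p - ?ext p)" .
  have "(\<Sum>p\<in>labelled_biflags E B m. xprod (fst p) * (?\<delta> - ?\<delta>' p)) \<in> chow_ideal E B"
  proof (rule ideal_gen_sum)
    fix p assume "p \<in> labelled_biflags E B m"
    then have "free_max E (fst p) \<in> E"
      using free_max_mem[OF assms(1) labelled_biflagsD(3)] by (metis DiffD1 prod.collapse)
    then show "xprod (fst p) * (?\<delta> - ?\<delta>' p) \<in> chow_ideal E B"
      by (intro ideal_gen_mult delta_diff_in_chow_ideal[OF assms])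
  qed
  moreover have "(\<Sum>p\<in>labelled_biflags E B m. xprod (fst p) * ?\<delta>' p - ?ext p) \<in> chow_ideal E B"
  proof (rule ideal_gen_sum)
    fix p assume "p \<in> labelled_biflags E B m"
    then show "xprod (fst p) * ?\<delta>' p - ?ext p \<in> chow_ideal E B"
      using xprod_delta_free_max[OF assms(1) labelled_biflagsD(3,1)] by (metis prod.collapse)
  qed
  ultimately show ?case
    unfolding split using Suc.IH by (intro ideal_gen_add ideal_gen_mult)
qed

section \<open>From labelled biflags to the index set \<open>T_set\<close>\<close>

definition label_fun :: "biflat list \<Rightarrow> nat list \<Rightarrow> biflat \<Rightarrow> nat" where
  "label_fun L e x = (case map_of (zip L e) x of None \<Rightarrow> 0 | Some v \<Rightarrow> v)"

lemma label_fun_nth: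
  "length L = length e \<Longrightarrow> distinct L \<Longrightarrow> i < length L \<Longrightarrow> label_fun L e (L ! i) = e ! i"
  unfolding label_fun_def using map_of_zip_nth[of L e i] by simp

lemma label_fun_notin:
  assumes "length L = length e" "x \<notin> set L"
  shows "label_fun L e x = 0"
proof -
  have "fst ` set (zip L e) = set L"
    using assms(1) by (metis map_fst_zip set_map)
  then have "map_of (zip L e) x = None"
    using assms(2) by (simp add: map_of_eq_None_iff)
  then show ?thesis
    by (simp add: label_fun_def)
qed

lemma label_fun_map: "distinct L \<Longrightarrow> label_fun L (map f L) x = (if x \<in> set L then f x else 0)"
  by (auto simp: in_set_conv_nth label_fun_nth label_fun_notin)

lemma label_fun_filter:
  assumes "length L = m" "length e = m" "distinct L"
  shows "{y \<in> set L. P (label_fun L e y)} = (\<lambda>j. L ! j) ` {j. j < m \<and> P (e ! j)}"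
proof (intro equalityI subsetI)
  fix y assume y: "y \<in> {y \<in> set L. P (label_fun L e y)}"
  then obtain j where "j < m" "y = L ! j"
    using assms(1) by (auto simp: in_set_conv_nth)
  with y show "y \<in> (\<lambda>j. L ! j) ` {j. j < m \<and> P (e ! j)}"
    using label_fun_nth[of L e j] assms by auto
next
  fix y assume "y \<in> (\<lambda>j. L ! j) ` {j. j < m \<and> P (e ! j)}"
  then obtain j where "j < m" "P (e ! j)" "y = L ! j"
    by blast
  then show "y \<in> {y \<in> set L. P (label_fun L e y)}"
    using label_fun_nth[of L e j] assms by simp
qed

definition biflat_weight :: "biflat \<Rightarrow> int" where
  "biflat_weight x = int (card (fst x)) - int (card (snd x))"

lemma biflat_weight_strict_mono:
  assumes "fst u \<subseteq> fst v" "snd v \<subseteq> snd u" "u \<noteq> v" "finite (fst v)" "finite (snd u)"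
  shows "biflat_weight u < biflat_weight v"
proof -
  have le: "card (fst u) \<le> card (fst v)" "card (snd v) \<le> card (snd u)"
    using assms by (simp_all add: card_mono)
  have "fst u \<noteq> fst v \<or> snd u \<noteq> snd v"
    using assms(3) by (simp add: prod_eq_iff)
  then have "card (fst u) < card (fst v) \<or> card (snd v) < card (snd u)"
    using assms psubset_card_mono by blast
  with le show ?thesis
    unfolding biflat_weight_def by linarith
qed

lemma compatible_iff:
  "compatible x y \<longleftrightarrow> fst x \<subseteq> fst y \<and> snd y \<subseteq> snd x \<or> fst y \<subseteq> fst x \<and> snd x \<subseteq> snd y"
  by (cases x; cases y) (simp add: compatible_def)

lemma biflat_weight_less_iff:
  assumes "finite E" "is_biflat E B x" "is_biflat E B y" "compatible x y" "x \<noteq> y"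
  shows "fst x \<subseteq> fst y \<and> snd y \<subseteq> snd x \<longleftrightarrow> biflat_weight x < biflat_weight y"
proof -
  have "fst x \<subseteq> E" "snd x \<subseteq> E" "fst y \<subseteq> E" "snd y \<subseteq> E"
    using is_biflat_subset[OF assms(2)] is_biflat_subset[OF assms(3)] by simp_all
  then have finite: "finite (fst x)" "finite (snd x)" "finite (fst y)" "finite (snd y)"
    using assms(1) by (simp_all add: finite_subset)
  have "fst x \<subseteq> fst y \<and> snd y \<subseteq> snd x \<or> fst y \<subseteq> fst x \<and> snd x \<subseteq> snd y"
    using assms(4) by (simp add: compatible_iff)
  then show ?thesis
  proof
    assume "fst x \<subseteq> fst y \<and> snd y \<subseteq> snd x"
    then show ?thesis
      using biflat_weight_strict_mono[of x y] assms(5) finite by simp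
  next
    assume le: "fst y \<subseteq> fst x \<and> snd x \<subseteq> snd y"
    then have "biflat_weight y < biflat_weight x"
      using biflat_weight_strict_mono[of y x] assms(5) finite by auto
    then show ?thesis
      using le assms(5) by (auto simp: prod_eq_iff)
  qed
qed

lemma T_setD:
  assumes "(L, e) \<in> T_set E B m"
  shows "length L = m" "distinct L" "is_biflag E B (set L)"
    "\<And>i j. i < j \<Longrightarrow> j < m \<Longrightarrow> fst (L ! i) \<subseteq> fst (L ! j) \<and> snd (L ! j) \<subseteq> snd (L ! i)"
    "length e = m" "distinct e" "set e \<subseteq> E"
    "\<And>i. i < m \<Longrightarrow> e ! i \<in> fst (L ! i) \<inter> snd (L ! i)"
    "\<And>i. i < m \<Longrightarrow> e ! i = Max (E - (\<Union>j\<in>{j. j < m \<and> e ! j > e ! i}. fst (L ! j) \<inter> snd (L ! j)))"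
  using assms unfolding T_set_def by blast+

lemma cores_nth: "\<Union>(core ` (\<lambda>j. L ! j) ` J) = (\<Union>j\<in>J. fst (L ! j) \<inter> snd (L ! j))"
  by (simp add: core_def)

definition labelled_of :: "biflat list \<times> nat list \<Rightarrow> biflat set \<times> (biflat \<Rightarrow> nat)" where
  "labelled_of = (\<lambda>(L, e). (set L, label_fun L e))"

lemma labelled_of_mem:
  assumes "(L, e) \<in> T_set E B m"
  shows "labelled_of (L, e) \<in> labelled_biflags E B m"
proof -
  note T = T_setD[OF assms]
  have len: "length L = length e"
    using T(1,5) by simp
  have label: "label_fun L e (L ! i) = e ! i" if "i < m" for i
    using label_fun_nth[OF len T(2)] that T(1) by simp
  have "inj_on (label_fun L e) (set L)"
  proof (rule inj_onI)
    fix x y assume "x \<in> set L" "y \<in> set L" and eq: "label_fun L e x = label_fun L e y"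
    then obtain i j where ij: "i < m" "x = L ! i" "j < m" "y = L ! j"
      using T(1) by (metis in_set_conv_nth)
    then have "e ! i = e ! j"
      using eq label by simp
    then show "x = y"
      using ij T(5,6) by (simp add: nth_eq_iff_index_eq)
  qed
  moreover have "label_fun L e x \<in> E \<inter> core x \<and>
      label_fun L e x = Max (E - \<Union>(core ` {y \<in> set L. label_fun L e x < label_fun L e y}))"
    if x: "x \<in> set L" for x
  proof -
    obtain i where i: "i < m" "x = L ! i"
      using x T(1) by (auto simp: in_set_conv_nth)
    have "{y \<in> set L. label_fun L e x < label_fun L e y} = (\<lambda>j. L ! j) ` {j. j < m \<and> e ! i < e ! j}"
      using label_fun_filter[OF T(1,5,2)] label i by simp
    then show ?thesis
      using label[OF i(1)] i T(1,5,7,8,9) nth_mem[of i e] by (auto simp: cores_nth core_def)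
  qed
  ultimately show ?thesis
    using T(1-3) label_fun_notin[OF len] by (auto simp: labelled_of_def labelled_biflags_def
        greedy_labelling_def distinct_card)
qed

lemma sorted_biflat_weight_T_set:
  assumes "finite E" "(L, e) \<in> T_set E B m"
  shows "sorted_wrt (<) (map biflat_weight L)"
proof -
  note T = T_setD[OF assms(2)]
  have "biflat_weight (L ! i) < biflat_weight (L ! j)" if "i < j" "j < length L" for i j
  proof -
    have "L ! i \<in> set L" "L ! j \<in> set L"
      using that by simp_all
    then have "is_biflat E B (L ! i)" "is_biflat E B (L ! j)" "compatible (L ! i) (L ! j)"
      using T(3) unfolding is_biflag_def by blast+
    moreover have "L ! i \<noteq> L ! j"
      using that T(2) by (simp add: nth_eq_iff_index_eq)
    ultimately show ?thesis
      using biflat_weight_less_iff[of E B "L ! i" "L ! j"] assms(1) T(4)[of i j] that T(1) by simp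
  qed
  then show ?thesis
    by (simp add: sorted_wrt_iff_nth_less)
qed

lemma labelled_of_inj_on:
  assumes "finite E"
  shows "inj_on labelled_of (T_set E B m)"
proof (rule inj_onI, clarify)
  fix L1 e1 L2 e2
  assume T1: "(L1, e1) \<in> T_set E B m" and T2: "(L2, e2) \<in> T_set E B m"
    and eq: "labelled_of (L1, e1) = labelled_of (L2, e2)"
  have sets: "set L1 = set L2" and labels: "label_fun L1 e1 = label_fun L2 e2"
    using eq by (simp_all add: labelled_of_def)
  have sorted: "sorted_wrt (<) (map biflat_weight L1)" "sorted_wrt (<) (map biflat_weight L2)"
    using sorted_biflat_weight_T_set[OF assms T1] sorted_biflat_weight_T_set[OF assms T2] .
  then have "map biflat_weight L1 = map biflat_weight L2"
    using sets by (simp add: strict_sorted_equal)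
  moreover have "inj_on biflat_weight (set L1 \<union> set L2)"
    using sorted(1) sets by (simp add: strict_sorted_iff distinct_map)
  ultimately have "L1 = L2"
    using inj_on_map_eq_map by blast
  moreover have "e = map (label_fun L e) L" if "(L, e) \<in> T_set E B m" for L e
    using T_setD[OF that] label_fun_nth[of L e] by (intro nth_equalityI) auto
  ultimately show "L1 = L2 \<and> e1 = e2"
    using T1 T2 labels by metis
qed

lemma chain_if_sorted_biflat_weight:
  assumes "finite E" "is_biflag E B (set L)" "distinct L" "sorted (map biflat_weight L)"
    and "i < j" "j < length L"
  shows "fst (L ! i) \<subseteq> fst (L ! j) \<and> snd (L ! j) \<subseteq> snd (L ! i)"
proof -
  have "L ! i \<in> set L" "L ! j \<in> set L" "L ! j \<noteq> L ! i"
    using assms(3,5,6) by (auto simp: nth_eq_iff_index_eq)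
  then have "is_biflat E B (L ! i)" "is_biflat E B (L ! j)" "compatible (L ! j) (L ! i)"
    using assms(2) unfolding is_biflag_def by blast+
  moreover have "biflat_weight (L ! i) \<le> biflat_weight (L ! j)"
    using assms(4-6) by (simp add: sorted_iff_nth_mono_less)
  ultimately have "\<not> (fst (L ! j) \<subseteq> fst (L ! i) \<and> snd (L ! i) \<subseteq> snd (L ! j))"
    using biflat_weight_less_iff[OF assms(1)] \<open>L ! j \<noteq> L ! i\<close> by simp
  with \<open>compatible (L ! j) (L ! i)\<close> show ?thesis
    unfolding compatible_iff by blast
qed

lemma labelled_biflags_in_labelled_of_image:
  assumes "finite E" "(S, f) \<in> labelled_biflags E B m"
  shows "(S, f) \<in> labelled_of ` T_set E B m"
proof -
  note LB = labelled_biflagsD[OF assms(2)]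
  obtain xs where xs: "set xs = S" "distinct xs"
    using finite_distinct_list[OF LB(1)] by blast
  define L where "L = sort_key biflat_weight xs"
  define e where "e = map f L"
  have L: "set L = S" "distinct L" "length L = m" "sorted (map biflat_weight L)"
    using xs LB(2) distinct_card[of L] unfolding L_def by simp_all
  have e: "length e = m" "\<And>i. i < m \<Longrightarrow> e ! i = f (L ! i)"
    unfolding e_def using L(3) by simp_all
  have label: "label_fun L e = f"
    using L(1,2) LB(4) by (auto simp: e_def label_fun_map)
  have "(L, e) \<in> T_set E B m"
    unfolding T_set_def mem_Collect_eq prod.case
  proof (intro conjI allI impI)
    show "length L = m" "distinct L" "length e = m" "is_biflag E B (set L)"
      using L(1-3) e(1) LB(3) by simp_all
    show "distinct e" "set e \<subseteq> E"
      using LB(5) L(1,2) unfolding e_def greedy_labelling_def by (auto simp: distinct_map)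
    fix i j
    assume "i < j \<and> j < m"
    then show "fst (L ! i) \<subseteq> fst (L ! j)" "snd (L ! j) \<subseteq> snd (L ! i)"
      using chain_if_sorted_biflat_weight[OF assms(1)] LB(3) L by simp_all
  next
    fix i
    assume i: "i < m"
    then have "L ! i \<in> S"
      using L(1,3) by auto
    then have labels: "f (L ! i) \<in> core (L ! i)"
        "f (L ! i) = Max (E - \<Union>(core ` {y \<in> S. f (L ! i) < f y}))"
      using greedy_labellingD(2,3)[OF LB(5)] by blast+
    have "{y \<in> S. f (L ! i) < f y} = (\<lambda>j. L ! j) ` {j. j < m \<and> e ! i < e ! j}"
      using label_fun_filter[OF L(3) e(1) L(2), of "\<lambda>v. e ! i < v"]
      unfolding label L(1) e(2)[OF i] .
    then show "e ! i \<in> fst (L ! i) \<inter> snd (L ! i)"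
      "e ! i = Max (E - (\<Union>j\<in>{j. j < m \<and> e ! j > e ! i}. fst (L ! j) \<inter> snd (L ! j)))"
      using labels e(2)[OF i] by (simp_all add: core_def cores_nth)
  qed
  moreover have "labelled_of (L, e) = (S, f)"
    unfolding labelled_of_def using L(1) label by simp
  ultimately show ?thesis
    by force
qed

lemma bij_betw_labelled_of:
  assumes "finite E"
  shows "bij_betw labelled_of (T_set E B m) (labelled_biflags E B m)"
  unfolding bij_betw_def
proof
  show "inj_on labelled_of (T_set E B m)"
    using assms by (rule labelled_of_inj_on)
  show "labelled_of ` T_set E B m = labelled_biflags E B m"
    using labelled_of_mem labelled_biflags_in_labelled_of_image[OF assms] by auto
qed

theorem mainTheorem7:
  fixes n m :: nat and B :: "nat set set"
  assumes "matroid_bases {0..n} B"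
    and "no_loops {0..n} B"
    and "no_coloops {0..n} B"
    and "i \<in> {0..n}"
  shows "chow_eq {0..n} B ((delta {0..n} B i) ^ m)
           (\<Sum>(L, e)\<in>T_set {0..n} B m. xprod (set L))"
proof -
  \<comment> \<open>Only finiteness of the ground set and \<open>i \<in> {0..n}\<close> are needed; the matroid hypotheses are not.\<close>
  have "(\<Sum>(L, e)\<in>T_set {0..n} B m. xprod (set L)) = (\<Sum>p\<in>labelled_biflags {0..n} B m. xprod (fst p))"
    using sum.reindex_bij_betw[OF bij_betw_labelled_of[of "{0..n}" B m], of "\<lambda>p. xprod (fst p)"]
    by (simp add: labelled_of_def case_prod_unfold)
  then show ?thesis
    unfolding chow_eq_def using delta_power_labelled_biflags[of "{0..n}" i B m] assms(4) by simp
qed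

end
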